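(* Let $\Lambda$ be a set of positive integers such that for all positive integers $a,b$: $a,b\in\Lambda$ if and only if $\operatorname{lcm}(a,b)\in\Lambda$. Suppose $\sigma=(\varepsilon,\varepsilon,\gamma;(123))$ is an autoparatopism of a Latin square $L$ of order $n$, and let $R_\Lambda=\{i\in[n]:o_\gamma(i)\in\Lambda\}$. If $R_\Lambda\ne\emptyset$, then the submatrix of $L$ with rows $R_\Lambda$ and columns $R_\Lambda$ is a subsquare of $L$ whose symbol set is $R_\Lambda$.
   Context: A Latin square $L$ of order $n$ is an $n\times n$ array with rows, columns and symbols indexed by $[n]$, in which each symbol occurs exactly once in each row and each column. Its set of triples is $O(L)$. A subsquare is a submatrix that is itself a Latin square. Permutations act on the right; $\varepsilon$ is the identity. A paratopism $(\alpha,\beta,\gamma;(123))$ maps $L$ to $L^\sigma$ with triple set $\{(z\gamma,x\alpha,y\beta):(x,y,z)\in O(L)\}$. It is an autoparatopism of $L$ if $L^\sigma=L$. $o_\pi(i)$ is the length of the cycle of $\pi$ containing $i$ (fixed points are cycles of length $1$). *)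

theory Defs
  imports "HOL-Combinatorics.Permutations"
begin

definition idx :: "nat \<Rightarrow> nat set" where
  "idx n = {1..n}"

text \<open>A set of triples T (row, column, symbol) forms a Latin square with rows R,
  columns C and symbols S: every triple lies in R x C x S, |R| = |C| = |S|, and
  each cell is filled exactly once, each symbol occurs exactly once in each row and column.\<close>
definition latin_on :: "nat set \<Rightarrow> nat set \<Rightarrow> nat set \<Rightarrow> (nat \<times> nat \<times> nat) set \<Rightarrow> bool" where
  "latin_on R C S T \<longleftrightarrow>
     finite R \<and> card R = card C \<and> card C = card S \<and>
     T \<subseteq> R \<times> C \<times> S \<and>
     (\<forall>x\<in>R. \<forall>y\<in>C. \<exists>!z. (x, y, z) \<in> T) \<and>
     (\<forall>x\<in>R. \<forall>z\<in>S. \<exists>!y. (x, y, z) \<in> T) \<and>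
     (\<forall>y\<in>C. \<forall>z\<in>S. \<exists>!x. (x, y, z) \<in> T)"

definition latin_square :: "nat \<Rightarrow> (nat \<times> nat \<times> nat) set \<Rightarrow> bool" where
  "latin_square n L \<longleftrightarrow> latin_on (idx n) (idx n) (idx n) L"

definition subsquare :: "(nat \<times> nat \<times> nat) set \<Rightarrow> nat set \<Rightarrow> nat set \<Rightarrow> nat set \<Rightarrow> bool" where
  "subsquare L R C S \<longleftrightarrow> latin_on R C S {(x, y, z) \<in> L. x \<in> R \<and> y \<in> C}"

text \<open>Paratopism (alpha, beta, gamma; (123)); permutations act on the right, so x alpha = alpha x.\<close>
definition paratopism_123 ::
  "(nat \<Rightarrow> nat) \<Rightarrow> (nat \<Rightarrow> nat) \<Rightarrow> (nat \<Rightarrow> nat) \<Rightarrow> (nat \<times> nat \<times> nat) set \<Rightarrow> (nat \<times> nat \<times> nat) set" where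
  "paratopism_123 \<alpha> \<beta> \<gamma> L = {(\<gamma> z, \<alpha> x, \<beta> y) | x y z. (x, y, z) \<in> L}"

definition autoparatopism_123 ::
  "nat \<Rightarrow> (nat \<Rightarrow> nat) \<Rightarrow> (nat \<Rightarrow> nat) \<Rightarrow> (nat \<Rightarrow> nat) \<Rightarrow> (nat \<times> nat \<times> nat) set \<Rightarrow> bool" where
  "autoparatopism_123 n \<alpha> \<beta> \<gamma> L \<longleftrightarrow>
     \<alpha> permutes idx n \<and> \<beta> permutes idx n \<and> \<gamma> permutes idx n \<and> paratopism_123 \<alpha> \<beta> \<gamma> L = L"

definition cyc_len :: "(nat \<Rightarrow> nat) \<Rightarrow> nat \<Rightarrow> nat" where
  "cyc_len \<pi> i = (LEAST k. 0 < k \<and> (\<pi> ^^ k) i = i)"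

end

(* Idea: three applications of the autoparatopism (id, id, gamma; (123)) show that gamma acts
   on L as the autotopism (gamma, gamma, gamma).  Since any two entries of a triple of a Latin
   square determine the third, the cycle length of each entry divides the lcm of the cycle
   lengths of the other two.  Closure of Lambda under lcm and under divisors then puts the
   third entry into R_Lambda whenever two entries lie in it, which is exactly what makes the
   R_Lambda x R_Lambda submatrix a subsquare on the symbols R_Lambda. *)

theory Submission
  imports Defs "HOL-Combinatorics.Cycles"
begin

lemma cyc_len_eq_least_power: "cyc_len \<pi> i = least_power \<pi> i"
  unfolding cyc_len_def least_power_def by (simp add: conj_commute)

lemma cyc_len_pos:
  assumes "permutation \<pi>"
  shows "0 < cyc_len \<pi> i"
  using least_power_of_permutation(2)[OF assms] by (simp add: cyc_len_eq_least_power)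

lemma cyc_len_dvd_iff:
  assumes "permutation \<pi>"
  shows "cyc_len \<pi> i dvd k \<longleftrightarrow> (\<pi> ^^ k) i = i"
  using least_power_dvd[OF assms] by (simp add: cyc_len_eq_least_power)

lemma cyc_len_apply:
  assumes "inj \<pi>"
  shows "cyc_len \<pi> (\<pi> i) = cyc_len \<pi> i"
proof -
  have "(\<pi> ^^ k) (\<pi> i) = \<pi> i \<longleftrightarrow> (\<pi> ^^ k) i = i" for k
    using assms by (metis funpow_swap1 injD)
  then show ?thesis
    unfolding cyc_len_def by simp
qed

lemma latin_onD:
  assumes "latin_on A B C L"
  shows "finite A" and "L \<subseteq> A \<times> B \<times> C"
    and "x \<in> A \<Longrightarrow> y \<in> B \<Longrightarrow> \<exists>!z. (x, y, z) \<in> L"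
    and "x \<in> A \<Longrightarrow> z \<in> C \<Longrightarrow> \<exists>!y. (x, y, z) \<in> L"
    and "y \<in> B \<Longrightarrow> z \<in> C \<Longrightarrow> \<exists>!x. (x, y, z) \<in> L"
  using assms unfolding latin_on_def by (elim conjE; simp)+

lemma latin_on_symbol_unique:
  assumes "latin_on A B C L" "(x, y, z) \<in> L" "(x, y, z') \<in> L"
  shows "z = z'"
proof -
  have "x \<in> A" "y \<in> B"
    using latin_onD(2)[OF assms(1)] assms(2) by auto
  then show ?thesis
    using latin_onD(3)[OF assms(1)] assms(2,3) by blast
qed

lemma subsquare_if_closed:
  assumes latin: "latin_on A B C L"
    and sub: "R \<subseteq> A" "K \<subseteq> B" "S \<subseteq> C"
    and card: "card R = card K" "card K = card S"
    and symbol: "\<And>x y z. (x, y, z) \<in> L \<Longrightarrow> x \<in> R \<Longrightarrow> y \<in> K \<Longrightarrow> z \<in> S"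
    and column: "\<And>x y z. (x, y, z) \<in> L \<Longrightarrow> x \<in> R \<Longrightarrow> z \<in> S \<Longrightarrow> y \<in> K"
    and row: "\<And>x y z. (x, y, z) \<in> L \<Longrightarrow> y \<in> K \<Longrightarrow> z \<in> S \<Longrightarrow> x \<in> R"
  shows "subsquare L R K S"
  unfolding subsquare_def latin_on_def
proof (intro conjI ballI)
  let ?T = "{(x, y, z) \<in> L. x \<in> R \<and> y \<in> K}"
  show "finite R"
    using latin_onD(1)[OF latin] sub(1) finite_subset by blast
  show "?T \<subseteq> R \<times> K \<times> S"
    using symbol by auto
  fix x y z
  show "\<exists>!z. (x, y, z) \<in> ?T" if "x \<in> R" "y \<in> K"
  proof -
    have "(x, y, z) \<in> ?T \<longleftrightarrow> (x, y, z) \<in> L" for z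
      using that by blast
    moreover have "\<exists>!z. (x, y, z) \<in> L"
      using latin_onD(3)[OF latin] sub that by blast
    ultimately show ?thesis
      by simp
  qed
  show "\<exists>!y. (x, y, z) \<in> ?T" if "x \<in> R" "z \<in> S"
  proof -
    have "(x, y, z) \<in> ?T \<longleftrightarrow> (x, y, z) \<in> L" for y
      using column that by blast
    moreover have "\<exists>!y. (x, y, z) \<in> L"
      using latin_onD(4)[OF latin] sub that by blast
    ultimately show ?thesis
      by simp
  qed
  show "\<exists>!x. (x, y, z) \<in> ?T" if "y \<in> K" "z \<in> S"
  proof -
    have "(x, y, z) \<in> ?T \<longleftrightarrow> (x, y, z) \<in> L" for x
      using row that by blast
    moreover have "\<exists>!x. (x, y, z) \<in> L"
      using latin_onD(5)[OF latin] sub that by blast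
    ultimately show ?thesis
      by simp
  qed
qed (use card in auto)

lemma autoparatopism_rotate:
  assumes "paratopism_123 id id \<gamma> L = L" "(x, y, z) \<in> L"
  shows "(\<gamma> z, x, y) \<in> L"
proof -
  have "(\<gamma> z, id x, id y) \<in> paratopism_123 id id \<gamma> L"
    unfolding paratopism_123_def using assms(2) by blast
  then show ?thesis
    using assms(1) by simp
qed

(* Three rotations give the autotopism (gamma, gamma, gamma). *)
lemma autoparatopism_funpow:
  assumes "paratopism_123 id id \<gamma> L = L" "(x, y, z) \<in> L"
  shows "((\<gamma> ^^ k) x, (\<gamma> ^^ k) y, (\<gamma> ^^ k) z) \<in> L"
proof (induction k)
  case (Suc k)
  then show ?case
    using autoparatopism_rotate[OF assms(1)] by simp
qed (use assms(2) in simp)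

lemma cyc_len_symbol_dvd_lcm:
  assumes latin: "latin_on A B C L" and perm: "permutation \<gamma>"
    and auto: "paratopism_123 id id \<gamma> L = L" and xyz: "(x, y, z) \<in> L"
  shows "cyc_len \<gamma> z dvd lcm (cyc_len \<gamma> x) (cyc_len \<gamma> y)"
proof -
  let ?k = "lcm (cyc_len \<gamma> x) (cyc_len \<gamma> y)"
  have "(\<gamma> ^^ ?k) x = x" "(\<gamma> ^^ ?k) y = y"
    using cyc_len_dvd_iff[OF perm, symmetric] by simp_all
  then have "(x, y, (\<gamma> ^^ ?k) z) \<in> L"
    using autoparatopism_funpow[OF auto xyz, of ?k] by simp
  then have "(\<gamma> ^^ ?k) z = z"
    using latin_on_symbol_unique[OF latin xyz] by metis
  then show ?thesis
    using cyc_len_dvd_iff[OF perm] by simp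
qed

lemma cyc_len_entry_dvd_lcm:
  assumes latin: "latin_on A B C L" and perm: "permutation \<gamma>"
    and auto: "paratopism_123 id id \<gamma> L = L" and xyz: "(x, y, z) \<in> L"
  shows "cyc_len \<gamma> z dvd lcm (cyc_len \<gamma> x) (cyc_len \<gamma> y)"
    and "cyc_len \<gamma> y dvd lcm (cyc_len \<gamma> z) (cyc_len \<gamma> x)"
    and "cyc_len \<gamma> x dvd lcm (cyc_len \<gamma> y) (cyc_len \<gamma> z)"
proof -
  have inj: "inj \<gamma>"
    using perm permutation_bijective bij_is_inj by blast
  have zxy: "(\<gamma> z, x, y) \<in> L" and yzx: "(\<gamma> y, \<gamma> z, x) \<in> L"
    using autoparatopism_rotate[OF auto] xyz by blast+
  show "cyc_len \<gamma> z dvd lcm (cyc_len \<gamma> x) (cyc_len \<gamma> y)"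
    using cyc_len_symbol_dvd_lcm[OF latin perm auto xyz] .
  show "cyc_len \<gamma> y dvd lcm (cyc_len \<gamma> z) (cyc_len \<gamma> x)"
    using cyc_len_symbol_dvd_lcm[OF latin perm auto zxy] by (simp add: cyc_len_apply[OF inj])
  show "cyc_len \<gamma> x dvd lcm (cyc_len \<gamma> y) (cyc_len \<gamma> z)"
    using cyc_len_symbol_dvd_lcm[OF latin perm auto yzx] by (simp add: cyc_len_apply[OF inj])
qed

lemma mem_if_dvd_lcm_mem:
  fixes \<Lambda> :: "nat set"
  assumes closed: "\<forall>a b. 0 < a \<and> 0 < b \<longrightarrow> ((a \<in> \<Lambda> \<and> b \<in> \<Lambda>) \<longleftrightarrow> lcm a b \<in> \<Lambda>)"
    and "a \<in> \<Lambda>" "b \<in> \<Lambda>" "0 < a" "0 < b" "0 < c" "c dvd lcm a b"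
  shows "c \<in> \<Lambda>"
proof -
  have "lcm a b \<in> \<Lambda>"
    using closed assms(2-5) by blast
  moreover have "lcm c (lcm a b) = lcm a b"
    using assms(7) by simp
  ultimately show ?thesis
    using closed assms(4-6) lcm_pos_nat by metis
qed

theorem theorem3p6:
  fixes n :: nat and L :: "(nat \<times> nat \<times> nat) set" and \<gamma> :: "nat \<Rightarrow> nat"
    and \<Lambda> :: "nat set"
  assumes "\<Lambda> \<subseteq> {0<..}"
    and "\<forall>a b. 0 < a \<and> 0 < b \<longrightarrow> ((a \<in> \<Lambda> \<and> b \<in> \<Lambda>) \<longleftrightarrow> lcm a b \<in> \<Lambda>)"
    and "latin_square n L"
    and "autoparatopism_123 n id id \<gamma> L"
    and "{i \<in> idx n. cyc_len \<gamma> i \<in> \<Lambda>} \<noteq> {}"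
  shows "subsquare L {i \<in> idx n. cyc_len \<gamma> i \<in> \<Lambda>} {i \<in> idx n. cyc_len \<gamma> i \<in> \<Lambda>}
           {i \<in> idx n. cyc_len \<gamma> i \<in> \<Lambda>}"
proof -
  \<comment> \<open>Neither \<open>\<Lambda> \<subseteq> {0<..}\<close> nor \<open>R \<noteq> {}\<close> is needed: cycle lengths are positive, and
    the empty array is a Latin square.\<close>
  define R where "R = {i \<in> idx n. cyc_len \<gamma> i \<in> \<Lambda>}"
  have latin: "latin_on (idx n) (idx n) (idx n) L"
    using assms(3) unfolding latin_square_def .
  have perm: "permutation \<gamma>" and auto: "paratopism_123 id id \<gamma> L = L"
    using assms(4) unfolding autoparatopism_123_def idx_def
    by (metis finite_atLeastAtMost permutation_permutes)+
  have closed: "c \<in> R"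
    if "a \<in> R" "b \<in> R" "c \<in> idx n" "cyc_len \<gamma> c dvd lcm (cyc_len \<gamma> a) (cyc_len \<gamma> b)"
    for a b c
  proof -
    note pos = cyc_len_pos[OF perm]
    have "cyc_len \<gamma> c \<in> \<Lambda>"
      using mem_if_dvd_lcm_mem[OF assms(2) _ _ pos pos pos] that unfolding R_def by blast
    then show ?thesis
      using that(3) unfolding R_def by blast
  qed
  have "subsquare L R R R"
  proof (rule subsquare_if_closed[OF latin])
    fix x y z assume xyz: "(x, y, z) \<in> L"
    note dvd = cyc_len_entry_dvd_lcm[OF latin perm auto xyz]
    have "x \<in> idx n" "y \<in> idx n" "z \<in> idx n"
      using xyz latin_onD(2)[OF latin] by auto
    then show "x \<in> R \<Longrightarrow> y \<in> R \<Longrightarrow> z \<in> R"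
      and "x \<in> R \<Longrightarrow> z \<in> R \<Longrightarrow> y \<in> R"
      and "y \<in> R \<Longrightarrow> z \<in> R \<Longrightarrow> x \<in> R"
      using closed[OF _ _ _ dvd(1)] closed[OF _ _ _ dvd(2)] closed[OF _ _ _ dvd(3)] by blast+
  qed (auto simp: R_def)
  then show ?thesis
    unfolding R_def .
qed

end
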